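(* Let $G=(V,E)$ be a finite simple undirected graph with $k$ vertices and let $n\ge k$ be an integer. Then $Y(n,G)\le D(n,k)$, with equality only if $G$ is the complete graph $K_k$.
   Context: A walk of length $n-1$ in a graph is a sequence of $n$ vertices $v_1,\dots,v_n$ such that $\{v_i,v_{i+1}\}$ is an edge for each $i$. $Y(n,G)$ denotes the number of walks of length $n-1$ in $G$ that visit every vertex of $G$ at least once. $D(n,k)=Y(n,K_k)$, where $K_k$ is the complete graph on $k$ (labelled) vertices. *)

theory Defs
  imports Main
begin

definition simple_graph :: "'a set \<Rightarrow> ('a \<Rightarrow> 'a \<Rightarrow> bool) \<Rightarrow> bool" where
  "simple_graph V E \<longleftrightarrow> finite V \<and> (\<forall>x y. E x y \<longrightarrow> x \<in> V \<and> y \<in> V)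
     \<and> (\<forall>x y. E x y \<longrightarrow> E y x) \<and> (\<forall>x. \<not> E x x)"

text \<open>A walk of length n-1: a sequence of n vertices v_1..v_n (a list of length n)
with consecutive vertices adjacent.\<close>
definition is_walk :: "'a set \<Rightarrow> ('a \<Rightarrow> 'a \<Rightarrow> bool) \<Rightarrow> nat \<Rightarrow> 'a list \<Rightarrow> bool" where
  "is_walk V E n ws \<longleftrightarrow> length ws = n \<and> set ws \<subseteq> V
     \<and> (\<forall>i. i + 1 < n \<longrightarrow> E (ws ! i) (ws ! (i + 1)))"

definition Y :: "nat \<Rightarrow> 'a set \<Rightarrow> ('a \<Rightarrow> 'a \<Rightarrow> bool) \<Rightarrow> nat" where
  "Y n V E = card {ws. is_walk V E n ws \<and> V \<subseteq> set ws}"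

definition D :: "nat \<Rightarrow> nat \<Rightarrow> nat" where
  "D n k = Y n {0..<k} (\<lambda>x y. x \<noteq> y)"

definition is_complete :: "'a set \<Rightarrow> ('a \<Rightarrow> 'a \<Rightarrow> bool) \<Rightarrow> bool" where
  "is_complete V E \<longleftrightarrow> (\<forall>x\<in>V. \<forall>y\<in>V. x \<noteq> y \<longrightarrow> E x y)"

end

theory Submission
  imports Defs
begin

text \<open>A bijection f from V onto the vertices of K_k maps covering walks of G injectively to
covering walks of K_k, since adjacent vertices of G are distinct. If u, v are distinct
non-adjacent vertices of G, a covering walk of K_k starting with f u, f v (which exists once
n \<ge> k) has no preimage, so the inequality is strict.\<close>

definition covering_walks :: "'a set \<Rightarrow> ('a \<Rightarrow> 'a \<Rightarrow> bool) \<Rightarrow> nat \<Rightarrow> 'a list set" where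
  "covering_walks V E n = {ws. is_walk V E n ws \<and> V \<subseteq> set ws}"

lemma Y_eq_card_covering_walks: "Y n V E = card (covering_walks V E n)"
  by (simp add: Y_def covering_walks_def)

lemma finite_covering_walks:
  assumes "finite V"
  shows "finite (covering_walks V E n)"
proof (rule finite_subset)
  show "covering_walks V E n \<subseteq> {xs. set xs \<subseteq> V \<and> length xs = n}"
    by (auto simp: covering_walks_def is_walk_def)
  show "finite {xs. set xs \<subseteq> V \<and> length xs = n}"
    using finite_lists_length_eq[OF assms] .
qed

lemma is_walk_snoc:
  assumes "is_walk V E n ws" "n \<ge> 1" "x \<in> V" "E (last ws) x"
  shows "is_walk V E (Suc n) (ws @ [x])"
proof -
  have len: "length ws = n" and steps: "\<forall>i. i + 1 < n \<longrightarrow> E (ws ! i) (ws ! (i + 1))"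
    using assms(1) by (auto simp: is_walk_def)
  have last: "last ws = ws ! (n - 1)"
    using len assms(2) by (cases ws) (auto simp: last_conv_nth)
  have "E ((ws @ [x]) ! i) ((ws @ [x]) ! (i + 1))" if "i + 1 < Suc n" for i
  proof (cases "i + 1 < n")
    case True
    then show ?thesis using steps len by (simp add: nth_append)
  next
    case False
    then have "i = n - 1" using that by simp
    then show ?thesis using assms(2,4) last len by (simp add: nth_append)
  qed
  then show ?thesis using assms(1,3) len by (auto simp: is_walk_def)
qed

lemma is_walk_map:
  assumes "is_walk V E n ws" "f ` V \<subseteq> V'"
    and "\<And>x y. x \<in> V \<Longrightarrow> y \<in> V \<Longrightarrow> E x y \<Longrightarrow> E' (f x) (f y)"
  shows "is_walk V' E' n (map f ws)"
proof -
  have len: "length ws = n" and sub: "set ws \<subseteq> V"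
    and steps: "\<And>i. i + 1 < n \<Longrightarrow> E (ws ! i) (ws ! (i + 1))"
    using assms(1) by (auto simp: is_walk_def)
  have "E' (f (ws ! i)) (f (ws ! (i + 1)))" if "i + 1 < n" for i
    using assms(3) steps[OF that] sub len that by (simp add: subset_code(1))
  then show ?thesis using len sub assms(2) by (auto simp: is_walk_def)
qed

lemma map_covering_walks_subset:
  assumes "bij_betw f V V'"
    and hom: "\<And>x y. x \<in> V \<Longrightarrow> y \<in> V \<Longrightarrow> E x y \<Longrightarrow> E' (f x) (f y)"
  shows "map f ` covering_walks V E n \<subseteq> covering_walks V' E' n"
proof
  fix w assume "w \<in> map f ` covering_walks V E n"
  then obtain ws where ws: "is_walk V E n ws" "V \<subseteq> set ws" and w: "w = map f ws"
    by (auto simp: covering_walks_def)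
  have image: "f ` V = V'" using assms(1) by (simp add: bij_betw_def)
  have "is_walk V' E' n w"
    unfolding w by (rule is_walk_map[OF ws(1)]) (use image hom in auto)
  moreover have "V' \<subseteq> set w" using image ws(2) w by auto
  ultimately show "w \<in> covering_walks V' E' n" by (simp add: covering_walks_def)
qed

lemma inj_on_map_covering_walks:
  assumes "inj_on f V"
  shows "inj_on (map f) (covering_walks V E n)"
  by (rule inj_on_mapI, rule inj_on_subset[OF assms])
    (auto simp: covering_walks_def is_walk_def)

lemma Y_le_of_bij_hom:
  assumes "finite V'" "bij_betw f V V'"
    and "\<And>x y. x \<in> V \<Longrightarrow> y \<in> V \<Longrightarrow> E x y \<Longrightarrow> E' (f x) (f y)"
  shows "Y n V E \<le> Y n V' E'"
proof -
  have "map f ` covering_walks V E n \<subseteq> covering_walks V' E' n"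
    by (rule map_covering_walks_subset[OF assms(2)]) (auto intro: assms(3))
  with bij_betw_imp_inj_on[OF assms(2)] show ?thesis
    unfolding Y_eq_card_covering_walks
    by (intro card_inj_on_le[OF inj_on_map_covering_walks _ finite_covering_walks[OF assms(1)]])
qed

lemma Y_less_of_bij_hom:
  assumes "finite V'" "bij_betw f V V'"
    and hom: "\<And>x y. x \<in> V \<Longrightarrow> y \<in> V \<Longrightarrow> E x y \<Longrightarrow> E' (f x) (f y)"
    and "u \<in> V" "v \<in> V" "\<not> E u v"
    and w: "w \<in> covering_walks V' E' n" "i + 1 < n" "w ! i = f u" "w ! (i + 1) = f v"
  shows "Y n V E < Y n V' E'"
proof -
  have inj: "inj_on f V" using assms(2) by (rule bij_betw_imp_inj_on)
  have "w \<notin> map f ` covering_walks V E n"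
  proof
    assume "w \<in> map f ` covering_walks V E n"
    then obtain ws where ws: "is_walk V E n ws" and "w = map f ws"
      by (auto simp: covering_walks_def)
    then have edge: "E (ws ! i) (ws ! (i + 1))" and "ws ! i \<in> V" "ws ! (i + 1) \<in> V"
         and "f (ws ! i) = f u" "f (ws ! (i + 1)) = f v"
      using w(2-4) nth_mem[of i ws] nth_mem[of "i + 1" ws] by (auto simp: is_walk_def)
    then have "ws ! i = u" "ws ! (i + 1) = v"
      using assms(4,5) inj by (auto simp: inj_on_def)
    then show False using edge assms(6) by simp
  qed
  moreover have "map f ` covering_walks V E n \<subseteq> covering_walks V' E' n"
    by (rule map_covering_walks_subset[OF assms(2)]) (auto intro: hom)
  ultimately have "map f ` covering_walks V E n \<subset> covering_walks V' E' n"
    using w(1) by blast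
  then have "card (map f ` covering_walks V E n) < card (covering_walks V' E' n)"
    by (rule psubset_card_mono[OF finite_covering_walks[OF assms(1)]])
  then show ?thesis
    by (simp add: Y_eq_card_covering_walks card_image[OF inj_on_map_covering_walks[OF inj]])
qed

text \<open>Base case: list a, b first and the remaining vertices in any order; longer walks
alternate between a and b at the end.\<close>
lemma complete_covering_walk_exists:
  assumes "finite V" "a \<in> V" "b \<in> V" "a \<noteq> b" "card V \<le> n"
  shows "\<exists>ws \<in> covering_walks V (\<lambda>x y. x \<noteq> y) n. ws ! 0 = a \<and> ws ! 1 = b"
  using assms(5)
proof (induction n rule: dec_induct)
  case base
  obtain rest where rest: "set rest = V - {a, b}" "distinct rest"
    using finite_distinct_list[of "V - {a, b}"] assms(1) by auto
  define L where "L = a # b # rest"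
  have distinct: "distinct L" and set: "set L = V"
    using assms rest by (auto simp: L_def)
  then have len: "length L = card V" using distinct_card by fastforce
  then have "\<forall>i. i + 1 < card V \<longrightarrow> L ! i \<noteq> L ! (i + 1)"
    using distinct by (simp add: nth_eq_iff_index_eq)
  then have "L \<in> covering_walks V (\<lambda>x y. x \<noteq> y) (card V)"
    using set len by (simp add: covering_walks_def is_walk_def)
  then show ?case by (intro bexI[of _ L]) (auto simp: L_def)
next
  case (step m)
  then obtain ws where ws: "is_walk V (\<lambda>x y. x \<noteq> y) m ws" "V \<subseteq> set ws"
    and start: "ws ! 0 = a" "ws ! 1 = b"
    by (auto simp: covering_walks_def)
  have "card {a, b} \<le> card V" using assms by (intro card_mono) auto
  then have m: "m \<ge> 2" using step(1) assms(4) by simp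
  have len: "length ws = m" using ws(1) by (simp add: is_walk_def)
  define x where "x = (if last ws = a then b else a)"
  have "is_walk V (\<lambda>x y. x \<noteq> y) (Suc m) (ws @ [x])"
    using is_walk_snoc[OF ws(1)] m assms by (auto simp: x_def)
  moreover have "(ws @ [x]) ! 0 = a" "(ws @ [x]) ! 1 = b"
    using start len m by (auto simp: nth_append)
  ultimately show ?case
    using ws(2) by (intro bexI[of _ "ws @ [x]"]) (auto simp: covering_walks_def)
qed

theorem mainTheorem2:
  fixes V :: "'a set" and E :: "'a \<Rightarrow> 'a \<Rightarrow> bool" and n k :: nat
  assumes "simple_graph V E" and "card V = k" and "n \<ge> k"
  shows "Y n V E \<le> D n k \<and> (Y n V E = D n k \<longrightarrow> is_complete V E)"
proof -
  have fin: "finite V" and irrefl: "\<And>x. \<not> E x x"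
    using assms(1) by (auto simp: simple_graph_def)
  obtain f where f: "bij_betw f V {0..<k}"
    using finite_same_card_bij[OF fin, of "{0..<k}"] assms(2) by auto
  have hom: "f x \<noteq> f y" if "x \<in> V" "y \<in> V" "E x y" for x y
    using that irrefl inj_onD[OF bij_betw_imp_inj_on[OF f]] by metis
  have le: "Y n V E \<le> D n k"
    unfolding D_def by (rule Y_le_of_bij_hom[OF _ f]) (simp_all add: hom)
  have "Y n V E < D n k" if incomplete: "\<not> is_complete V E"
  proof -
    obtain u v where uv: "u \<in> V" "v \<in> V" "u \<noteq> v" "\<not> E u v"
      using incomplete by (auto simp: is_complete_def)
    have fuv: "f u \<in> {0..<k}" "f v \<in> {0..<k}" "f u \<noteq> f v"
      using uv f by (auto simp: bij_betw_def inj_on_def)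
    then obtain w where w: "w \<in> covering_walks {0..<k} (\<lambda>x y. x \<noteq> y) n"
      "w ! 0 = f u" "w ! 1 = f v"
      using complete_covering_walk_exists[of "{0..<k}", OF _ fuv] assms(3) by auto
    have "1 < n" using fuv assms(3) by auto
    then show ?thesis
      unfolding D_def
      by (intro Y_less_of_bij_hom[where E = E and i = 0, OF _ f _ uv(1,2,4) w(1)])
        (use hom w(2,3) in simp_all)
  qed
  with le show ?thesis by fastforce
qed

end
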